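(* Let $p$ be a prime, $q$ a power of $p$, $n\ge1$ odd, $m=\frac{q^n+1}{q+1}$. Let $\Sigma$ be the set of pairs $(H,M)$ such that $H\le A(P_\infty)$ and $M\le\mu$ are subgroups with $M^m:=\{d^m:d\in M\}=\phi(H)$. For a subgroup $G\le B(Q_\infty)$ set $\Xi(G)=(\pi(G),\pi_d(G))$. Then $\Xi$ is a bijection from the set of subgroups of $B(Q_\infty)$ onto $\Sigma$.
   Context: Let $\mathcal C_n=\mathbb{F}_{q^{2n}}(x,y,z)$ be the function field defined by $x^q+x=y^{q+1}$ and $z^m=y^{q^2}-y$. Let $A(P_\infty)$ be the group of symbols $[a,b,c]$ with $a\in\mathbb{F}_{q^2}^*$, $b,c\in\mathbb{F}_{q^2}$, $c^q+c=b^{q+1}$, with group law $[a',b',c']\circ[a,b,c]=[a'a,ab'+b,a^{q+1}c'+ab^qb'+c]$ (the automorphisms $x\mapsto a^{q+1}x+ab^qy+c$, $y\mapsto ay+b$ of the Hermitian function field $\mathbb{F}_{q^2}(x,y)$), and $\phi:A(P_\infty)\to\mathbb{F}_{q^2}^*$, $[a,b,c]\mapsto a$. Let $B(Q_\infty)$ be the group of automorphisms $[a,b,c,d]$ of $\mathcal C_n$ given by $x\mapsto a^{q+1}x+ab^qy+c$, $y\mapsto ay+b$, $z\mapsto dz$, where $a\in\mathbb{F}_{q^2}^*$, $b,c\in\mathbb{F}_{q^2}$, $c^q+c=b^{q+1}$, $d\in\mathbb{F}_{q^{2n}}$, $d^m=a$; its group law is $[a',b',c',d']\circ[a,b,c,d]=[a'a,ab'+b,a^{q+1}c'+ab^qb'+c,d'd]$.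 Let $\mu\le\mathbb{F}_{q^{2n}}^*$ be the group of $(q^n+1)(q-1)$-th roots of unity. Define $\pi:B(Q_\infty)\to A(P_\infty)$, $[a,b,c,d]\mapsto[a,b,c]$, and $\pi_d:B(Q_\infty)\to\mu$, $[a,b,c,d]\mapsto d$. *)

theory Defs
  imports "HOL-Computational_Algebra.Primes" "HOL-Algebra.Group"
begin

text \<open>The ambient field F_{q^{2n}} is modelled by a finite field type 'a with
CARD('a) = q^(2n). The subfield F_{q^2} is the set of x with x^(q^2) = x.\<close>

definition Fq2 :: "nat \<Rightarrow> ('a::field) set" where
  "Fq2 q = {x. x ^ (q^2) = x}"

definition A_carrier :: "nat \<Rightarrow> ('a::field \<times> 'a \<times> 'a) set" where
  "A_carrier q = {(a,b,c). a \<in> Fq2 q \<and> a \<noteq> 0 \<and> b \<in> Fq2 q \<and> c \<in> Fq2 q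
                     \<and> c ^ q + c = b ^ (q+1)}"

definition A_mult :: "nat \<Rightarrow> ('a::field \<times> 'a \<times> 'a) \<Rightarrow> ('a \<times> 'a \<times> 'a) \<Rightarrow> ('a \<times> 'a \<times> 'a)" where
  "A_mult q = (\<lambda>(a',b',c') (a,b,c). (a'*a, a*b'+b, a^(q+1)*c' + a*b^q*b' + c))"

definition A_grp :: "nat \<Rightarrow> ('a::field \<times> 'a \<times> 'a) monoid" where
  "A_grp q = \<lparr> carrier = A_carrier q, mult = A_mult q, one = (1,0,0) \<rparr>"

definition phi :: "('a::field \<times> 'a \<times> 'a) \<Rightarrow> 'a" where
  "phi = (\<lambda>(a,b,c). a)"

definition B_carrier :: "nat \<Rightarrow> nat \<Rightarrow> ('a::field \<times> 'a \<times> 'a \<times> 'a) set" where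
  "B_carrier q m = {(a,b,c,d). (a,b,c) \<in> A_carrier q \<and> d ^ m = a}"

definition B_mult :: "nat \<Rightarrow> ('a::field \<times> 'a \<times> 'a \<times> 'a) \<Rightarrow> ('a \<times> 'a \<times> 'a \<times> 'a) \<Rightarrow> ('a \<times> 'a \<times> 'a \<times> 'a)" where
  "B_mult q = (\<lambda>(a',b',c',d') (a,b,c,d).
               (a'*a, a*b'+b, a^(q+1)*c' + a*b^q*b' + c, d'*d))"

definition B_grp :: "nat \<Rightarrow> nat \<Rightarrow> ('a::field \<times> 'a \<times> 'a \<times> 'a) monoid" where
  "B_grp q m = \<lparr> carrier = B_carrier q m, mult = B_mult q, one = (1,0,0,1) \<rparr>"

definition pi_B :: "('a \<times> 'a \<times> 'a \<times> 'a) \<Rightarrow> ('a \<times> 'a \<times> 'a)" where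
  "pi_B = (\<lambda>(a,b,c,d). (a,b,c))"

definition pi_d :: "('a \<times> 'a \<times> 'a \<times> 'a) \<Rightarrow> 'a" where
  "pi_d = (\<lambda>(a,b,c,d). d)"

definition mu_grp :: "nat \<Rightarrow> nat \<Rightarrow> ('a::field) monoid" where
  "mu_grp q n = \<lparr> carrier = {d. d ^ ((q^n+1)*(q-1)) = 1}, mult = (*), one = 1 \<rparr>"

definition Sigma_set :: "nat \<Rightarrow> nat \<Rightarrow> nat \<Rightarrow> (('a::field \<times> 'a \<times> 'a) set \<times> 'a set) set" where
  "Sigma_set q n m = {(H,M). subgroup H (A_grp q) \<and> subgroup M (mu_grp q n)
                        \<and> (\<lambda>d. d ^ m) ` M = phi ` H}"

definition Xi :: "('a \<times> 'a \<times> 'a \<times> 'a) set \<Rightarrow> ('a \<times> 'a \<times> 'a) set \<times> 'a set" where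
  "Xi G = (pi_B ` G, pi_d ` G)"

end

theory Submission
  imports Defs "HOL-Number_Theory.Residues"
begin

text \<open>Both projections are homomorphisms, so \<open>\<Xi>\<close> maps subgroups into \<open>\<Sigma>\<close>, and for
\<open>(H, M) \<in> \<Sigma>\<close> the fibre product \<open>{[a,b,c,d] | [a,b,c] \<in> H, d \<in> M, d^m = a}\<close> is a subgroup
with \<open>\<Xi>\<close>-image \<open>(H, M)\<close>. What remains is that every subgroup \<open>G\<close> is the fibre product of its
two projections. Let \<open>g\<^sub>1 = [a,b,c,d\<^sub>1] \<in> G\<close> and \<open>g\<^sub>2 \<in> G\<close> with last coordinate \<open>d\<close>, where
\<open>d^m = a\<close>. Then \<open>g\<^sub>2 g\<^sub>1\<^sup>-\<^sup>1 = [1,b',c',z]\<close> with \<open>z = d/d\<^sub>1\<close>, because \<open>z^m = a/a = 1\<close>. Its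
\<open>p\<close>-th power is \<open>[1,0,C,z^p]\<close> and its \<open>p^2\<close>-th power is \<open>[1,0,0,z^(p^2)]\<close>; as \<open>z^m = 1\<close> and
\<open>p\<close> is prime to \<open>m\<close>, a power of the latter is \<open>[1,0,0,z]\<close>, and \<open>[1,0,0,z] g\<^sub>1 = [a,b,c,d]\<close>.\<close>

text \<open>Up to the final theorem, the characteristic enters only through two hypotheses:
additivity of \<open>x \<mapsto> x^q\<close> and \<open>of_nat p = 0\<close>.\<close>

lemma additive_power_uminus:
  fixes x :: "'a::field"
  assumes frob: "\<And>x y::'a. (x + y) ^ q = x ^ q + y ^ q" and "q > 0"
  shows "(- x) ^ q = - (x ^ q)"
proof -
  have "x ^ q + (- x) ^ q = (x + - x) ^ q" using frob[of x "- x"] by simp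
  also have "\<dots> = 0" using \<open>q > 0\<close> by simp
  finally show ?thesis by (simp add: add_eq_0_iff)
qed

lemma additive_power_square:
  fixes x :: "'a::field"
  assumes frob: "\<And>x y::'a. (x + y) ^ q = x ^ q + y ^ q"
  shows "(x + y) ^ (q\<^sup>2) = x ^ (q\<^sup>2) + y ^ (q\<^sup>2)"
  by (simp add: power2_eq_square power_mult frob)

lemma Fq2_mult: "x \<in> Fq2 q \<Longrightarrow> y \<in> Fq2 q \<Longrightarrow> x * y \<in> Fq2 q"
  by (simp add: Fq2_def power_mult_distrib)

lemma Fq2_inverse: "x \<in> Fq2 q \<Longrightarrow> inverse x \<in> Fq2 q"
  by (simp add: Fq2_def power_inverse)

lemma Fq2_power: "x \<in> Fq2 q \<Longrightarrow> x ^ j \<in> Fq2 q"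
  by (simp add: Fq2_def flip: power_mult) (metis mult.commute power_mult)

lemma Fq2_add:
  fixes x :: "'a::field"
  assumes "\<And>x y::'a. (x + y) ^ q = x ^ q + y ^ q"
  shows "x \<in> Fq2 q \<Longrightarrow> y \<in> Fq2 q \<Longrightarrow> x + y \<in> Fq2 q"
  by (simp add: Fq2_def additive_power_square[OF assms])

lemma Fq2_uminus:
  fixes x :: "'a::field"
  assumes frob: "\<And>x y::'a. (x + y) ^ q = x ^ q + y ^ q" and "q > 0" and "x \<in> Fq2 q"
  shows "- x \<in> Fq2 q"
proof -
  have "(- x) ^ (q\<^sup>2) = - (x ^ (q\<^sup>2))"
    using additive_power_square[OF frob] \<open>q > 0\<close> by (intro additive_power_uminus) auto
  then show ?thesis using \<open>x \<in> Fq2 q\<close> by (simp add: Fq2_def)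
qed

lemma Fq2_power_power: "x \<in> Fq2 q \<Longrightarrow> (x ^ q) ^ q = x"
  by (simp add: Fq2_def power2_eq_square flip: power_mult)

lemma A_mult_apply [simp]:
  "A_mult q (a', b', c') (a, b, c) = (a' * a, a * b' + b, a ^ (q + 1) * c' + a * b ^ q * b' + c)"
  by (simp add: A_mult_def)

lemma A_mult_closed:
  fixes a b c a' b' c' :: "'a::field"
  assumes frob: "\<And>x y::'a. (x + y) ^ q = x ^ q + y ^ q"
    and x: "(a', b', c') \<in> A_carrier q" and y: "(a, b, c) \<in> A_carrier q"
  shows "A_mult q (a', b', c') (a, b, c) \<in> A_carrier q"
proof -
  from x have a': "a' \<in> Fq2 q" "a' \<noteq> 0" "b' \<in> Fq2 q" "c' \<in> Fq2 q" "c' ^ q + c' = b' ^ (q + 1)"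
    by (auto simp: A_carrier_def)
  from y have a: "a \<in> Fq2 q" "a \<noteq> 0" "b \<in> Fq2 q" "c \<in> Fq2 q" "c ^ q + c = b ^ (q + 1)"
    by (auto simp: A_carrier_def)
  define B where "B = a * b' + b"
  define C where "C = a ^ (q + 1) * c' + a * b ^ q * b' + c"
  have Cq: "C ^ q = a * a ^ q * c' ^ q + a ^ q * b * b' ^ q + c ^ q"
    unfolding C_def using Fq2_power_power[OF a(1)] Fq2_power_power[OF a(3)]
    by (simp add: frob power_mult_distrib)
  have "C ^ q + C = a * a ^ q * (c' ^ q + c') + a ^ q * b * b' ^ q + a * b ^ q * b' + (c ^ q + c)"
    unfolding Cq by (simp add: C_def algebra_simps)
  also have "\<dots> = (a ^ q * b' ^ q + b ^ q) * (a * b' + b)"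
    using a'(5) a(5) by (simp add: algebra_simps)
  also have "\<dots> = B ^ (q + 1)"
    by (simp add: B_def frob power_mult_distrib)
  finally have "C ^ q + C = B ^ (q + 1)" .
  moreover have "a' * a \<in> Fq2 q" "B \<in> Fq2 q" "C \<in> Fq2 q"
    using a a' by (auto simp: B_def C_def intro!: Fq2_mult Fq2_add[OF frob] Fq2_power)
  ultimately show ?thesis
    using a a' by (simp add: A_carrier_def B_def C_def)
qed

lemma A_mult_assoc:
  fixes x y z :: "'a::field \<times> 'a \<times> 'a"
  assumes frob: "\<And>x y::'a. (x + y) ^ q = x ^ q + y ^ q"
  shows "A_mult q (A_mult q x y) z = A_mult q x (A_mult q y z)"
proof -
  obtain a3 b3 c3 a2 b2 c2 a1 b1 c1 where "x = (a3, b3, c3)" "y = (a2, b2, c2)" "z = (a1, b1, c1)"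
    by (metis prod.exhaust)
  moreover have "(a1 * b2 + b1) ^ q = a1 ^ q * b2 ^ q + b1 ^ q"
    by (simp add: frob power_mult_distrib)
  ultimately show ?thesis
    by (simp add: algebra_simps power_mult_distrib)
qed

lemma A_inverse:
  fixes a b c :: "'a::field"
  assumes frob: "\<And>x y::'a. (x + y) ^ q = x ^ q + y ^ q" and "q > 0"
    and abc: "(a, b, c) \<in> A_carrier q"
  shows "(inverse a, - b / a, c ^ q / a ^ (q + 1)) \<in> A_carrier q"
    and "A_mult q (inverse a, - b / a, c ^ q / a ^ (q + 1)) (a, b, c) = (1, 0, 0)"
proof -
  from abc have a: "a \<in> Fq2 q" "a \<noteq> 0" "b \<in> Fq2 q" "c \<in> Fq2 q" "c ^ q + c = b ^ (q + 1)"
    by (auto simp: A_carrier_def)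
  have minus_one: "(-1::'a) ^ q = -1" using additive_power_uminus[OF frob \<open>q > 0\<close>, of 1] by simp
  have "(c ^ q / a ^ (q + 1)) ^ q + c ^ q / a ^ (q + 1) = (c + c ^ q) / a ^ (q + 1)"
    using Fq2_power_power[OF a(1)] Fq2_power_power[OF a(4)] a(2)
    by (simp add: power_divide power_mult_distrib field_simps)
  also have "\<dots> = (- b / a) ^ (q + 1)"
    using a(5) minus_one a(2) by (simp add: power_divide power_minus' add.commute)
  finally have "(c ^ q / a ^ (q + 1)) ^ q + c ^ q / a ^ (q + 1) = (- b / a) ^ (q + 1)" .
  moreover have "inverse a \<in> Fq2 q" "- b / a \<in> Fq2 q" "c ^ q / a ^ (q + 1) \<in> Fq2 q"
    using a by (auto simp: divide_inverse
        intro!: Fq2_mult Fq2_uminus[OF frob \<open>q > 0\<close>] Fq2_power Fq2_inverse)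
  ultimately show "(inverse a, - b / a, c ^ q / a ^ (q + 1)) \<in> A_carrier q"
    using a(2) by (simp add: A_carrier_def)
  show "A_mult q (inverse a, - b / a, c ^ q / a ^ (q + 1)) (a, b, c) = (1, 0, 0)"
    using a(2) a(5) by (simp add: field_simps)
qed

lemma group_A_grp:
  assumes frob: "\<And>x y::'a::field. (x + y) ^ q = x ^ q + y ^ q" and "q > 0"
  shows "group (A_grp q :: ('a \<times> 'a \<times> 'a) monoid)"
proof (rule groupI)
  fix x y :: "'a \<times> 'a \<times> 'a"
  assume "x \<in> carrier (A_grp q)" "y \<in> carrier (A_grp q)"
  then show "x \<otimes>\<^bsub>A_grp q\<^esub> y \<in> carrier (A_grp q)"
    using A_mult_closed[OF frob] by (cases x, cases y) (auto simp: A_grp_def)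
next
  show "\<one>\<^bsub>A_grp q\<^esub> \<in> carrier (A_grp q)"
    using \<open>q > 0\<close> by (simp add: A_grp_def A_carrier_def Fq2_def)
next
  fix x y z :: "'a \<times> 'a \<times> 'a"
  show "x \<otimes>\<^bsub>A_grp q\<^esub> y \<otimes>\<^bsub>A_grp q\<^esub> z = x \<otimes>\<^bsub>A_grp q\<^esub> (y \<otimes>\<^bsub>A_grp q\<^esub> z)"
    using A_mult_assoc[OF frob] by (simp add: A_grp_def)
next
  fix x :: "'a \<times> 'a \<times> 'a"
  show "\<one>\<^bsub>A_grp q\<^esub> \<otimes>\<^bsub>A_grp q\<^esub> x = x"
    by (cases x) (simp add: A_grp_def)
next
  fix x :: "'a \<times> 'a \<times> 'a"
  assume "x \<in> carrier (A_grp q)"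
  then show "\<exists>y\<in>carrier (A_grp q). y \<otimes>\<^bsub>A_grp q\<^esub> x = \<one>\<^bsub>A_grp q\<^esub>"
    using A_inverse[OF frob \<open>q > 0\<close>] by (cases x) (force simp: A_grp_def)
qed

lemma B_mult_apply [simp]:
  "B_mult q (a', b', c', d') (a, b, c, d) =
     (a' * a, a * b' + b, a ^ (q + 1) * c' + a * b ^ q * b' + c, d' * d)"
  by (simp add: B_mult_def)

lemma B_carrier_iff: "(a, b, c, d) \<in> B_carrier q m \<longleftrightarrow> (a, b, c) \<in> A_carrier q \<and> d ^ m = a"
  by (simp add: B_carrier_def)

lemma pi_B_mult: "pi_B (B_mult q x y) = A_mult q (pi_B x) (pi_B y)"
  by (cases x, cases y) (simp add: pi_B_def)

lemma pi_d_mult: "pi_d (B_mult q x y) = pi_d x * pi_d y"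
  by (cases x, cases y) (simp add: pi_d_def)

lemma group_B_grp:
  assumes frob: "\<And>x y::'a::field. (x + y) ^ q = x ^ q + y ^ q" and "q > 0" and "m > 0"
  shows "group (B_grp q m :: ('a \<times> 'a \<times> 'a \<times> 'a) monoid)"
proof (rule groupI)
  fix x y :: "'a \<times> 'a \<times> 'a \<times> 'a"
  assume "x \<in> carrier (B_grp q m)" "y \<in> carrier (B_grp q m)"
  then show "x \<otimes>\<^bsub>B_grp q m\<^esub> y \<in> carrier (B_grp q m)"
    using A_mult_closed[OF frob]
    by (cases x, cases y) (auto simp: B_grp_def B_carrier_iff power_mult_distrib)
next
  show "\<one>\<^bsub>B_grp q m\<^esub> \<in> carrier (B_grp q m)"
    using \<open>q > 0\<close> by (simp add: B_grp_def B_carrier_iff A_carrier_def Fq2_def)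
next
  fix x y z :: "'a \<times> 'a \<times> 'a \<times> 'a"
  show "x \<otimes>\<^bsub>B_grp q m\<^esub> y \<otimes>\<^bsub>B_grp q m\<^esub> z = x \<otimes>\<^bsub>B_grp q m\<^esub> (y \<otimes>\<^bsub>B_grp q m\<^esub> z)"
    using A_mult_assoc[OF frob, of "pi_B x" "pi_B y" "pi_B z"]
    by (cases x, cases y, cases z) (simp add: B_grp_def pi_B_def)
next
  fix x :: "'a \<times> 'a \<times> 'a \<times> 'a"
  show "\<one>\<^bsub>B_grp q m\<^esub> \<otimes>\<^bsub>B_grp q m\<^esub> x = x"
    by (cases x) (simp add: B_grp_def)
next
  fix x :: "'a \<times> 'a \<times> 'a \<times> 'a"
  assume "x \<in> carrier (B_grp q m)"
  then obtain a b c d where x: "x = (a, b, c, d)" "(a, b, c) \<in> A_carrier q" "d ^ m = a"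
    by (cases x) (auto simp: B_grp_def B_carrier_iff)
  have "a \<noteq> 0" using x(2) by (simp add: A_carrier_def)
  then have "d \<noteq> 0" using x(3) \<open>m > 0\<close> by auto
  have "inverse d ^ m = inverse a" using x(3) by (simp add: power_inverse)
  then show "\<exists>y\<in>carrier (B_grp q m). y \<otimes>\<^bsub>B_grp q m\<^esub> x = \<one>\<^bsub>B_grp q m\<^esub>"
    using A_inverse[OF frob \<open>q > 0\<close> x(2)] x(1) \<open>d \<noteq> 0\<close>
    by (intro bexI[of _ "(inverse a, - b / a, c ^ q / a ^ (q + 1), inverse d)"])
       (auto simp: B_grp_def B_carrier_iff)
qed

lemma group_mu_grp:
  assumes "q \<ge> 2"
  shows "group (mu_grp q n :: ('a::field) monoid)"
proof -
  have N: "(q ^ n + 1) * (q - 1) \<noteq> 0" using assms by simp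
  show ?thesis
  proof (rule groupI)
    fix x :: 'a
    assume "x \<in> carrier (mu_grp q n)"
    then have "x ^ ((q ^ n + 1) * (q - 1)) = 1" by (simp add: mu_grp_def)
    moreover from this N have "x \<noteq> 0" by (metis power_0_left zero_neq_one)
    ultimately show "\<exists>y\<in>carrier (mu_grp q n). y \<otimes>\<^bsub>mu_grp q n\<^esub> x = \<one>\<^bsub>mu_grp q n\<^esub>"
      by (intro bexI[of _ "inverse x"]) (simp_all add: mu_grp_def power_inverse)
  qed (auto simp: mu_grp_def power_mult_distrib)
qed

lemma pi_B_hom: "pi_B \<in> hom (B_grp q m) (A_grp q)"
  by (auto simp: hom_def B_grp_def A_grp_def B_carrier_def pi_B_def pi_B_mult)

text \<open>The hypothesis rewrites the exponent of \<open>\<mu>\<close> as \<open>m(q^2 - 1)\<close>, which shows that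
\<open>d^m \<in> F\<^sub>q\<^sub>2\<^sup>*\<close> forces \<open>d \<in> \<mu>\<close>.\<close>

lemma pi_d_hom:
  assumes N: "(q ^ n + 1) * (q - 1) = m * (q\<^sup>2 - 1)"
  shows "pi_d \<in> hom (B_grp q m) (mu_grp q n :: ('a::field) monoid)"
proof -
  have "d ^ (m * (q\<^sup>2 - 1)) = 1" if "(a, b, c, d) \<in> B_carrier q m" for a b c d :: 'a
  proof -
    have a: "a ^ (q\<^sup>2) = a" "a \<noteq> 0" "d ^ m = a"
      using that by (auto simp: B_carrier_iff A_carrier_def Fq2_def)
    have "a ^ (q\<^sup>2 - 1) = 1"
    proof (cases "q = 0")
      case False
      then have "a ^ (q\<^sup>2) = a ^ (q\<^sup>2 - 1) * a" by (simp flip: power_Suc2)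
      with a show ?thesis by simp
    qed simp
    then show ?thesis using a(3) by (simp add: power_mult)
  qed
  then show ?thesis
    unfolding hom_def mu_grp_def N by (auto simp: B_grp_def B_carrier_def pi_d_def pi_d_mult)
qed

lemma group_hom_pi_B:
  assumes "\<And>x y::'a::field. (x + y) ^ q = x ^ q + y ^ q" and "q > 0" and "m > 0"
  shows "group_hom (B_grp q m) (A_grp q :: ('a \<times> 'a \<times> 'a) monoid) pi_B"
  using group_B_grp[OF assms] group_A_grp[OF assms(1,2)] pi_B_hom
  by (simp add: group_hom_def group_hom_axioms_def)

lemma group_hom_pi_d:
  assumes "\<And>x y::'a::field. (x + y) ^ q = x ^ q + y ^ q" and "q \<ge> 2" and "m > 0"
    and "(q ^ n + 1) * (q - 1) = m * (q\<^sup>2 - 1)"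
  shows "group_hom (B_grp q m) (mu_grp q n :: 'a monoid) pi_d"
  using group_B_grp[OF assms(1) _ assms(3)] assms(2) group_mu_grp[OF assms(2), where 'a='a]
    pi_d_hom[OF assms(4)]
  by (simp add: group_hom_def group_hom_axioms_def)

lemma (in group_hom) subgroup_vimage:
  assumes "subgroup K H"
  shows "subgroup (carrier G \<inter> h -` K) G"
proof (rule G.subgroupI)
  interpret K: subgroup K H by (rule assms)
  show "carrier G \<inter> h -` K \<noteq> {}" using G.one_closed by force
  show "inv x \<in> carrier G \<inter> h -` K" if "x \<in> carrier G \<inter> h -` K" for x
    using that by simp
  show "x \<otimes> y \<in> carrier G \<inter> h -` K" if "x \<in> carrier G \<inter> h -` K" "y \<in> carrier G \<inter> h -` K" for x y
    using that by simp
qed blast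

definition fibre_product :: "nat \<Rightarrow> ('a::field \<times> 'a \<times> 'a) set \<Rightarrow> 'a set \<Rightarrow> ('a \<times> 'a \<times> 'a \<times> 'a) set"
  where "fibre_product m H M = {(a, b, c, d). (a, b, c) \<in> H \<and> d \<in> M \<and> d ^ m = a}"

lemma fibre_product_eq_vimage:
  assumes "H \<subseteq> A_carrier q"
  shows "fibre_product m H M = (carrier (B_grp q m) \<inter> pi_B -` H) \<inter> (carrier (B_grp q m) \<inter> pi_d -` M)"
  using assms by (auto simp: fibre_product_def B_grp_def B_carrier_def pi_B_def pi_d_def)

lemma Xi_fibre_product:
  assumes "(\<lambda>d. d ^ m) ` M = phi ` H"
  shows "Xi (fibre_product m H M) = (H, M)"
proof -
  have "pi_B ` fibre_product m H M = H"
  proof (intro equalityI subsetI)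
    fix x assume "x \<in> H"
    moreover obtain a b c where x: "x = (a, b, c)" by (metis prod.exhaust)
    ultimately have "a \<in> (\<lambda>d. d ^ m) ` M" unfolding assms by (force simp: phi_def)
    then obtain d where "d \<in> M" "d ^ m = a" by blast
    with \<open>x \<in> H\<close> have "(a, b, c, d) \<in> fibre_product m H M" by (simp add: x fibre_product_def)
    then show "x \<in> pi_B ` fibre_product m H M" by (force simp: x pi_B_def)
  qed (auto simp: fibre_product_def pi_B_def)
  moreover have "pi_d ` fibre_product m H M = M"
  proof (intro equalityI subsetI)
    fix d assume "d \<in> M"
    then have "d ^ m \<in> phi ` H" unfolding assms[symmetric] by blast
    then obtain a b c where "(a, b, c) \<in> H" "a = d ^ m" by (auto simp: phi_def)
    with \<open>d \<in> M\<close> have "(a, b, c, d) \<in> fibre_product m H M" by (simp add: fibre_product_def)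
    then show "d \<in> pi_d ` fibre_product m H M" by (force simp: pi_d_def)
  qed (auto simp: fibre_product_def pi_d_def)
  ultimately show ?thesis by (simp add: Xi_def)
qed

lemma B_grp_pow_unipotent:
  "\<exists>C. (1, b, c, z) [^]\<^bsub>B_grp q m\<^esub> (k::nat) = (1, of_nat k * b, C, z ^ k)"
proof (induction k)
  case (Suc k)
  then obtain C where "(1, b, c, z) [^]\<^bsub>B_grp q m\<^esub> k = (1, of_nat k * b, C, z ^ k)" by blast
  then show ?case
    by (intro exI[of _ "C + b ^ q * (of_nat k * b) + c"]) (simp add: B_grp_def algebra_simps)
qed (simp add: B_grp_def)

lemma B_grp_pow_central:
  "(1, 0, c, z) [^]\<^bsub>B_grp q m\<^esub> (k::nat) = (1, 0, of_nat k * c, z ^ k)"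
  by (induction k) (simp_all add: B_grp_def algebra_simps)

lemma power_eq_power_mod:
  fixes z :: "'a::monoid_mult"
  assumes "z ^ m = 1"
  shows "z ^ k = z ^ (k mod m)"
  by (metis assms div_mult_mod_eq mult.commute power_add power_mult power_one mult_1)

lemma subgroup_B_grp_dilation_mem:
  fixes z :: "'a::field"
  assumes G: "subgroup G (B_grp q m)"
    and char: "of_nat p = (0::'a)" and "coprime p m"
    and g: "(1, b, c, z) \<in> G"
  shows "(1, 0, 0, z) \<in> G"
proof -
  interpret G: subgroup G "B_grp q m" by (rule G)
  have pow_closed: "x [^]\<^bsub>B_grp q m\<^esub> (k::nat) \<in> G" if "x \<in> G" for x k
    using that by (induction k) auto
  have "z ^ m = 1" using g G.subset by (auto simp: B_grp_def B_carrier_iff)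
  obtain C where "(1, b, c, z) [^]\<^bsub>B_grp q m\<^esub> p = (1, 0, C, z ^ p)"
    using B_grp_pow_unipotent[where b=b and c=c and z=z and q=q and m=m and k=p] char by auto
  then have "(1, 0, C, z ^ p) \<in> G" using pow_closed[OF g] by metis
  from pow_closed[OF this, of p] have "(1, 0, 0, z ^ (p * p)) \<in> G"
    using char by (simp add: B_grp_pow_central power_mult)
  from pow_closed[OF this] have pow_pp: "(1, 0, 0, z ^ (p * p * j)) \<in> G" for j
    by (simp add: B_grp_pow_central power_mult)
  obtain j where "[p * p * j = 1] (mod m)"
    using cong_solve_coprime_nat[of "p * p" m] \<open>coprime p m\<close> by auto
  then have "z ^ (p * p * j) = z"
    using power_eq_power_mod[OF \<open>z ^ m = 1\<close>] by (metis cong_def power_one_right)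
  then show ?thesis using pow_pp[of j] by simp
qed

lemma fibre_product_Xi:
  fixes G :: "('a::field \<times> 'a \<times> 'a \<times> 'a) set"
  assumes grpB: "group (B_grp q m :: ('a \<times> 'a \<times> 'a \<times> 'a) monoid)"
    and G: "subgroup G (B_grp q m)"
    and char: "of_nat p = (0::'a)" and "coprime p m" and "m > 0"
  shows "fibre_product m (pi_B ` G) (pi_d ` G) = G"
proof (intro equalityI subsetI)
  interpret B: group "B_grp q m :: ('a \<times> 'a \<times> 'a \<times> 'a) monoid" by (rule grpB)
  interpret G: subgroup G "B_grp q m" by (rule G)
  have mult_B: "x \<otimes>\<^bsub>B_grp q m\<^esub> y = B_mult q x y" for x y by (simp add: B_grp_def)
  have in_carrier: "\<And>a b c d. (a, b, c, d) \<in> G \<Longrightarrow> (a, b, c) \<in> A_carrier q \<and> d ^ m = a"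
    using G.subset by (auto simp: B_grp_def B_carrier_iff)
  fix x assume "x \<in> fibre_product m (pi_B ` G) (pi_d ` G)"
  then obtain a b c d d1 a2 b2 c2 where x: "x = (a, b, c, d)" "d ^ m = a"
    and g1: "(a, b, c, d1) \<in> G" and g2: "(a2, b2, c2, d) \<in> G"
    by (auto simp: fibre_product_def pi_B_def pi_d_def split: prod.splits)
  have "a \<noteq> 0" "d1 ^ m = a" using in_carrier[OF g1] by (auto simp: A_carrier_def)
  then have "d1 \<noteq> 0" using \<open>m > 0\<close> by auto
  define h where "h = (a2, b2, c2, d) \<otimes>\<^bsub>B_grp q m\<^esub> inv\<^bsub>B_grp q m\<^esub> (a, b, c, d1)"
  have "h \<in> G" using g1 g2 by (simp add: h_def)
  then obtain a' b' c' z where h: "h = (a', b', c', z)" "(a', b', c', z) \<in> G"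
    by (metis prod.exhaust)
  have "h \<otimes>\<^bsub>B_grp q m\<^esub> (a, b, c, d1) = (a2, b2, c2, d)"
    using g1 g2 by (simp add: h_def B.m_assoc)
  then have "z * d1 = d" by (simp add: mult_B h)
  then have "z ^ m = 1" using \<open>d ^ m = a\<close> \<open>d1 ^ m = a\<close> \<open>a \<noteq> 0\<close> by (metis power_mult_distrib mult_cancel_right2)
  with in_carrier[OF h(2)] have "(1, b', c', z) \<in> G" using h(2) by simp
  then have "(1, 0, 0, z) \<in> G" using subgroup_B_grp_dilation_mem[OF G char \<open>coprime p m\<close>] by blast
  then have "B_mult q (1, 0, 0, z) (a, b, c, d1) \<in> G" using g1 by (metis G.m_closed mult_B)
  then show "x \<in> G" using x \<open>z * d1 = d\<close> by simp
next
  fix x assume "x \<in> G"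
  then show "x \<in> fibre_product m (pi_B ` G) (pi_d ` G)"
    using subgroup.subset[OF G]
    by (cases x) (force simp: fibre_product_def B_grp_def B_carrier_iff pi_B_def pi_d_def)
qed

lemma subgroup_fibre_product:
  fixes H :: "('a::field \<times> 'a \<times> 'a) set"
  assumes frob: "\<And>x y::'a. (x + y) ^ q = x ^ q + y ^ q" and "q \<ge> 2" and "m > 0"
    and N: "(q ^ n + 1) * (q - 1) = m * (q\<^sup>2 - 1)"
    and H: "subgroup H (A_grp q)" and M: "subgroup M (mu_grp q n)"
  shows "subgroup (fibre_product m H M) (B_grp q m)"
proof -
  have "H \<subseteq> A_carrier q" using subgroup.subset[OF H] by (simp add: A_grp_def)
  moreover have "subgroup (carrier (B_grp q m) \<inter> pi_B -` H) (B_grp q m)"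
    using group_hom.subgroup_vimage[OF group_hom_pi_B[OF frob] H] assms by simp
  moreover have "subgroup (carrier (B_grp q m) \<inter> pi_d -` M) (B_grp q m)"
    using group_hom.subgroup_vimage[OF group_hom_pi_d[OF frob \<open>q \<ge> 2\<close> \<open>m > 0\<close> N] M] .
  ultimately show ?thesis
    using group.subgroups_Inter_pair[OF group_B_grp[OF frob]] assms
    by (simp add: fibre_product_eq_vimage)
qed

lemma Xi_in_Sigma_set:
  fixes G :: "('a::field \<times> 'a \<times> 'a \<times> 'a) set"
  assumes frob: "\<And>x y::'a. (x + y) ^ q = x ^ q + y ^ q" and "q \<ge> 2" and "m > 0"
    and N: "(q ^ n + 1) * (q - 1) = m * (q\<^sup>2 - 1)"
    and G: "subgroup G (B_grp q m)"
  shows "Xi G \<in> Sigma_set q n m"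
proof -
  have "subgroup (pi_B ` G) (A_grp q)"
    using group_hom.subgroup_img_is_subgroup[OF group_hom_pi_B[OF frob] G] assms by simp
  moreover have "subgroup (pi_d ` G) (mu_grp q n)"
    using group_hom.subgroup_img_is_subgroup[OF group_hom_pi_d[OF frob \<open>q \<ge> 2\<close> \<open>m > 0\<close> N] G] .
  moreover have "(\<lambda>d. d ^ m) ` pi_d ` G = phi ` pi_B ` G"
    using subgroup.subset[OF G] unfolding image_image
    by (intro image_cong) (auto simp: pi_d_def pi_B_def phi_def B_grp_def B_carrier_def)
  ultimately show ?thesis by (simp add: Xi_def Sigma_set_def)
qed

lemma bij_betw_Xi:
  assumes frob: "\<And>x y::'a::field. (x + y) ^ q = x ^ q + y ^ q" and "q \<ge> 2" and "m > 0"
    and N: "(q ^ n + 1) * (q - 1) = m * (q\<^sup>2 - 1)"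
    and char: "of_nat p = (0::'a)" and "coprime p m"
  shows "bij_betw (Xi :: ('a \<times> 'a \<times> 'a \<times> 'a) set \<Rightarrow> _)
           {G. subgroup G (B_grp q m)} (Sigma_set q n m)"
proof (rule bij_betw_byWitness[where f'="\<lambda>(H, M). fibre_product m H M"])
  have grpB: "group (B_grp q m :: ('a \<times> 'a \<times> 'a \<times> 'a) monoid)"
    using group_B_grp[OF frob] assms by simp
  show "\<forall>G \<in> {G :: ('a \<times> 'a \<times> 'a \<times> 'a) set. subgroup G (B_grp q m)}.
          (\<lambda>(H, M). fibre_product m H M) (Xi G) = G"
    using fibre_product_Xi[OF grpB _ char \<open>coprime p m\<close> \<open>m > 0\<close>] by (clarsimp simp: Xi_def)
  show "\<forall>HM \<in> Sigma_set q n m. Xi ((\<lambda>(H, M). fibre_product m H M) HM) = HM"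
    using Xi_fibre_product by (auto simp: Sigma_set_def)
  show "Xi ` {G :: ('a \<times> 'a \<times> 'a \<times> 'a) set. subgroup G (B_grp q m)} \<subseteq> Sigma_set q n m"
    using Xi_in_Sigma_set[OF frob \<open>q \<ge> 2\<close> \<open>m > 0\<close> N] by auto
  show "(\<lambda>(H, M). fibre_product m H M) ` Sigma_set q n m
          \<subseteq> {G :: ('a \<times> 'a \<times> 'a \<times> 'a) set. subgroup G (B_grp q m)}"
    using subgroup_fibre_product[OF frob \<open>q \<ge> 2\<close> \<open>m > 0\<close> N] by (auto simp: Sigma_set_def)
qed

lemma plus_one_dvd_power_plus_one:
  fixes x :: nat
  assumes "odd n"
  shows "x + 1 dvd x ^ n + 1"
proof -
  have "[int x = -1] (mod int x + 1)" by (simp add: cong_iff_dvd_diff)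
  then have "[int x ^ n = -1] (mod int x + 1)" using cong_pow[of "int x" "-1" _ n] assms by simp
  then have "int (x + 1) dvd int (x ^ n + 1)" by (simp add: cong_iff_dvd_diff ac_simps)
  then show ?thesis by (simp only: int_dvd_int_iff)
qed

lemma CHAR_eq_of_card_prime_power:
  assumes "prime p" and "card (UNIV :: ('a::{field,finite}) set) = p ^ j" and "j > 0"
  shows "CHAR('a) = p"
proof -
  have "prime CHAR('a)" by (simp add: finite_imp_CHAR_pos prime_CHAR_semidom)
  moreover have "CHAR('a) dvd p ^ j" using CHAR_dvd_CARD[where 'a='a] assms(2) by simp
  ultimately show ?thesis
    using assms(1) by (metis prime_dvd_power primes_dvd_imp_eq)
qed

theorem theorem3p5:
  fixes p q n m k :: nat
  assumes "prime p" and "k \<ge> 1" and "q = p ^ k"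
    and "n \<ge> 1" and "odd n"
    and "card (UNIV :: ('a::{field,finite}) set) = q ^ (2*n)"
    and "m = (q ^ n + 1) div (q + 1)"
  shows "bij_betw (Xi :: ('a \<times> 'a \<times> 'a \<times> 'a) set \<Rightarrow> _)
           {G. subgroup G (B_grp q m)} (Sigma_set q n m)"
proof -
  have "p dvd q" using assms(2,3) by (simp add: dvd_power)
  have "q \<ge> 2"
    using \<open>p dvd q\<close> assms(1,3) prime_ge_2_nat[of p] by (metis dvd_imp_le le_trans prime_gt_0_nat zero_less_power)
  have char: "CHAR('a) = p"
    using CHAR_eq_of_card_prime_power[OF assms(1), of "k * (2 * n)"] assms by (simp add: power_mult)
  have frob: "\<And>x y::'a. (x + y) ^ q = x ^ q + y ^ q"
    using freshmans_dream'[where 'a='a] char assms(1,3) by simp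
  have m_q: "m * (q + 1) = q ^ n + 1"
    using plus_one_dvd_power_plus_one[OF assms(5)] assms(7) by (metis dvd_div_mult_self)
  have "q\<^sup>2 - 1 = (q + 1) * (q - 1)" by (simp add: power2_eq_square algebra_simps)
  with m_q have N: "(q ^ n + 1) * (q - 1) = m * (q\<^sup>2 - 1)" by (metis mult.assoc)
  have "m > 0" using m_q by (cases m) auto
  have "\<not> p dvd m"
  proof
    assume "p dvd m"
    then have "p dvd q ^ n + 1" by (metis m_q dvd_mult2)
    moreover have "p dvd q ^ n" using dvd_trans[OF \<open>p dvd q\<close> dvd_power[of n q]] assms(4) by simp
    ultimately show False using assms(1) by (metis dvd_add_right_iff not_prime_1 nat_dvd_1_iff_1)
  qed
  then have "coprime p m" using assms(1) by (simp add: prime_imp_coprime)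
  show ?thesis
    using bij_betw_Xi[OF frob \<open>q \<ge> 2\<close> \<open>m > 0\<close> N _ \<open>coprime p m\<close>] of_nat_CHAR[where 'a='a]
    by (simp add: char)
qed

end
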